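(* Let $A=\begin{bmatrix}a&b\\c&d\end{bmatrix}$ be a real $2\times2$ matrix with two distinct real standard eigenvalues, at least one of which, $\lambda_A$, is an interior L-eigenvalue of $A$, and suppose $\lambda_A\neq a$. Then for every $\varepsilon>0$ there is $\delta>0$ such that every real $2\times 2$ matrix $B$ with $\|B-A\|_F<\delta$ has an interior L-eigenvalue $\lambda_B$ with $|\lambda_A-\lambda_B|<\varepsilon$.
   Context: $\|\cdot\|_F$ is the Frobenius norm. Lorentz cone $\mathcal{K}=\{(x_1,x_2)^T:|x_1|\le x_2\}$; a real $\lambda$ is an L-eigenvalue of $A$ if there is a nonzero $x\in\mathcal{K}$ with $(A-\lambda I)x\in\mathcal{K}$ and $x^T(A-\lambda I)x=0$; it is an interior L-eigenvalue if such $x$ can be taken in the interior of $\mathcal{K}$. Standard eigenvalues are roots of the characteristic polynomial. *)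

theory Defs
  imports "HOL-Analysis.Analysis"
begin

definition lorentz_cone :: "(real^2) set" where
  "lorentz_cone = {x. \<bar>x $ 1\<bar> \<le> x $ 2}"

definition L_eigenvalue :: "real^2^2 \<Rightarrow> real \<Rightarrow> bool" where
  "L_eigenvalue A lam \<longleftrightarrow> (\<exists>x. x \<noteq> 0 \<and> x \<in> lorentz_cone \<and>
      (A - lam *\<^sub>R mat 1) *v x \<in> lorentz_cone \<and> x \<bullet> ((A - lam *\<^sub>R mat 1) *v x) = 0)"

definition interior_L_eigenvalue :: "real^2^2 \<Rightarrow> real \<Rightarrow> bool" where
  "interior_L_eigenvalue A lam \<longleftrightarrow> (\<exists>x. x \<noteq> 0 \<and> x \<in> interior lorentz_cone \<and>
      (A - lam *\<^sub>R mat 1) *v x \<in> lorentz_cone \<and> x \<bullet> ((A - lam *\<^sub>R mat 1) *v x) = 0)"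

definition std_eigenvalue :: "real^2^2 \<Rightarrow> real \<Rightarrow> bool" where
  "std_eigenvalue A lam \<longleftrightarrow> det (lam *\<^sub>R mat 1 - A) = 0"

definition frob_norm :: "real^2^2 \<Rightarrow> real" where
  "frob_norm M = sqrt (\<Sum>i\<in>UNIV. \<Sum>j\<in>UNIV. (M $ i $ j)^2)"

end

theory Submission
  imports Defs
begin

text \<open>
  Since the Lorentz cone is self-dual, \<open>x \<bullet> y = 0\<close> with \<open>x\<close> interior and \<open>y\<close> in the cone
  forces \<open>y = 0\<close>; so interior L-eigenvalues are exactly the eigenvalues having an eigenvector in
  the open cone \<open>\<bar>x\<^sub>1\<bar> < x\<^sub>2\<close>. Distinct eigenvalues make the discriminant of the characteristic
  polynomial positive, so \<open>\<lambda>\<^sub>A\<close> is one branch \<open>(tr B \<plusminus> \<surd>disc B) / 2\<close> of the eigenvalues of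
  nearby \<open>B\<close>, continuous in \<open>B\<close>. As \<open>\<lambda>\<^sub>A \<noteq> a\<close>, the eigenspace of \<open>A\<close> is spanned by
  \<open>(b, \<lambda>\<^sub>A - a)\<close>; the same formula gives eigenvectors of \<open>B\<close> depending continuously on \<open>B\<close>, and
  openness of the cone keeps a fixed multiple of them inside it for \<open>B\<close> near \<open>A\<close>.
\<close>

lemma continuous_on_UNIV_tendsto_nhds:
  fixes f :: "'a::t2_space \<Rightarrow> 'b::topological_space"
  assumes "continuous_on UNIV f"
  shows "(f \<longlongrightarrow> f a) (nhds a)"
proof -
  from assms have "isCont f a" by (simp add: continuous_on_eq_continuous_at)
  then show ?thesis by (simp add: isCont_def tendsto_at_iff_tendsto_nhds)
qed

definition char_discr :: "real^2^2 \<Rightarrow> real" where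
  "char_discr M = (M$1$1 - M$2$2)\<^sup>2 + 4 * M$1$2 * M$2$1"

text \<open>Isabelle's \<open>sqrt\<close> is continuous on all of \<open>\<real>\<close>, so each branch is continuous in \<open>M\<close>,
  even where a negative discriminant keeps it from being an eigenvalue.\<close>
definition eigen_branch :: "real \<Rightarrow> real^2^2 \<Rightarrow> real" where
  "eigen_branch s M = (trace M + s * sqrt (char_discr M)) / 2"

definition eigen_vector_2 :: "real^2^2 \<Rightarrow> real \<Rightarrow> real^2" where
  "eigen_vector_2 M l = vector [M$1$2, l - M$1$1]"

lemma frob_norm_eq_norm: "frob_norm M = norm M"
  by (simp add: frob_norm_def norm_vec_def L2_set_def sum_2 real_norm_def)

lemma trace_2: "trace (M::real^2^2) = M$1$1 + M$2$2"
  by (simp add: trace_def sum_2)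

lemma inner_2: "(x::real^2) \<bullet> y = x$1 * y$1 + x$2 * y$2"
  by (simp add: inner_vec_def sum_2)

lemma matrix_minus_scaleR_mat_vector_2:
  fixes M :: "real^2^2"
  shows "((M - l *\<^sub>R mat 1) *v x) $ 1 = (M$1$1 - l) * x$1 + M$1$2 * x$2"
    and "((M - l *\<^sub>R mat 1) *v x) $ 2 = M$2$1 * x$1 + (M$2$2 - l) * x$2"
  by (simp_all add: matrix_vector_mult_def sum_2 mat_def algebra_simps)

lemma interior_lorentz_cone: "interior lorentz_cone = {x. \<bar>x$1\<bar> < x$2}"
proof
  show "{x. \<bar>x$1\<bar> < x$2} \<subseteq> interior lorentz_cone"
  proof (rule interior_maximal)
    show "{x::real^2. \<bar>x$1\<bar> < x$2} \<subseteq> lorentz_cone" by (auto simp: lorentz_cone_def)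
    show "open {x::real^2. \<bar>x$1\<bar> < x$2}" by (intro open_Collect_less continuous_intros)
  qed
  show "interior lorentz_cone \<subseteq> {x. \<bar>x$1\<bar> < x$2}"
  proof
    fix x assume "x \<in> interior lorentz_cone"
    then obtain r where r: "r > 0" "ball x r \<subseteq> lorentz_cone" by (meson mem_interior)
    define y where "y = x - (r/2) *\<^sub>R axis 2 1"
    have "dist x y < r" using r by (simp add: y_def dist_norm norm_vec_def L2_set_def sum_2 axis_def)
    then have "y \<in> lorentz_cone" using r by auto
    then show "x \<in> {x. \<bar>x$1\<bar> < x$2}" using r by (simp add: y_def lorentz_cone_def axis_def)
  qed
qed

lemma inner_interior_lorentz_cone_eq_0D:
  assumes x: "x \<in> interior lorentz_cone" and y: "y \<in> lorentz_cone" and "x \<bullet> y = 0"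
  shows "y = 0"
proof -
  have x12: "\<bar>x$1\<bar> < x$2" using x by (simp add: interior_lorentz_cone)
  have y12: "\<bar>y$1\<bar> \<le> y$2" using y by (simp add: lorentz_cone_def)
  have "y$2 = 0"
  proof (rule ccontr)
    assume "y$2 \<noteq> 0"
    with y12 have "y$2 > 0" by linarith
    have "- (x$1 * y$1) \<le> \<bar>x$1\<bar> * \<bar>y$1\<bar>" by (metis abs_ge_minus_self abs_mult)
    also have "\<dots> \<le> \<bar>x$1\<bar> * y$2" using y12 by (simp add: mult_left_mono)
    also have "\<dots> < x$2 * y$2" using x12 \<open>y$2 > 0\<close> by (simp add: mult_strict_right_mono)
    finally show False using \<open>x \<bullet> y = 0\<close> by (simp add: inner_2)
  qed
  with y12 have "y$1 = 0" by simp
  with \<open>y$2 = 0\<close> show ?thesis by (simp add: vec_eq_iff forall_2)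
qed

lemma interior_L_eigenvalue_iff:
  "interior_L_eigenvalue A l \<longleftrightarrow> (\<exists>x \<in> interior lorentz_cone. (A - l *\<^sub>R mat 1) *v x = 0)"
proof
  assume "interior_L_eigenvalue A l"
  then show "\<exists>x \<in> interior lorentz_cone. (A - l *\<^sub>R mat 1) *v x = 0"
    by (auto simp: interior_L_eigenvalue_def dest: inner_interior_lorentz_cone_eq_0D)
next
  assume "\<exists>x \<in> interior lorentz_cone. (A - l *\<^sub>R mat 1) *v x = 0"
  then obtain x where x: "x \<in> interior lorentz_cone" "(A - l *\<^sub>R mat 1) *v x = 0" by blast
  then have "x \<noteq> 0" by (auto simp: interior_lorentz_cone)
  with x show "interior_L_eigenvalue A l"
    by (auto simp: interior_L_eigenvalue_def lorentz_cone_def)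
qed

lemma std_eigenvalue_iff_char_discr:
  "std_eigenvalue M l \<longleftrightarrow> (2 * l - trace M)\<^sup>2 = char_discr M"
proof -
  have "4 * det (l *\<^sub>R mat 1 - M) = (2 * l - trace M)\<^sup>2 - char_discr M"
    by (simp add: det_2 mat_def trace_2 char_discr_def power2_eq_square algebra_simps)
  then show ?thesis by (auto simp: std_eigenvalue_def)
qed

lemma char_discr_pos:
  assumes "std_eigenvalue M l" "std_eigenvalue M m" "l \<noteq> m"
  shows "0 < char_discr M"
proof (rule ccontr)
  assume "\<not> 0 < char_discr M"
  with assms(1,2) have "(2 * l - trace M)\<^sup>2 \<le> 0" "(2 * m - trace M)\<^sup>2 \<le> 0"
    by (simp_all add: std_eigenvalue_iff_char_discr)
  then have "2 * l - trace M = 0" "2 * m - trace M = 0" by simp_all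
  with assms(3) show False by simp
qed

lemma std_eigenvalue_eq_eigen_branch:
  assumes "std_eigenvalue M l" "0 < char_discr M"
  obtains s where "\<bar>s\<bar> = 1" "eigen_branch s M = l"
proof
  from assms(1) have discr: "char_discr M = (2 * l - trace M)\<^sup>2"
    by (simp add: std_eigenvalue_iff_char_discr)
  with assms(2) show "\<bar>sgn (2 * l - trace M)\<bar> = 1" by (auto simp: abs_sgn)
  from discr have "sqrt (char_discr M) = \<bar>2 * l - trace M\<bar>" by simp
  then show "eigen_branch (sgn (2 * l - trace M)) M = l" by (simp add: eigen_branch_def sgn_mult_abs)
qed

lemma std_eigenvalue_eigen_branch:
  assumes "0 \<le> char_discr M" "\<bar>s\<bar> = 1"
  shows "std_eigenvalue M (eigen_branch s M)"
proof -
  have "2 * eigen_branch s M - trace M = s * sqrt (char_discr M)"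
    by (simp add: eigen_branch_def field_simps)
  then have "(2 * eigen_branch s M - trace M)\<^sup>2 = \<bar>s\<bar>\<^sup>2 * (sqrt (char_discr M))\<^sup>2"
    by (simp add: power_mult_distrib)
  also have "\<dots> = char_discr M" using assms by simp
  finally show ?thesis by (simp add: std_eigenvalue_iff_char_discr)
qed

lemma continuous_on_eigen_branch: "continuous_on UNIV (eigen_branch s)"
  unfolding eigen_branch_def char_discr_def trace_2 by (intro continuous_intros) auto

lemma continuous_on_eigen_vector_2:
  assumes "continuous_on UNIV f"
  shows "continuous_on UNIV (\<lambda>M. eigen_vector_2 M (f M))"
proof -
  have "eigen_vector_2 M l = (\<chi> i. if i = 1 then M$1$2 else l - M$1$1)" for M l
    by (simp add: eigen_vector_2_def vec_eq_iff forall_2)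
  moreover have "continuous_on UNIV (\<lambda>M. (\<chi> i. if i = 1 then M$1$2 else f M - M$1$1) :: real^2)"
  proof (rule continuous_on_vec_lambda)
    fix i :: 2
    have "continuous_on UNIV (\<lambda>M. f M - M$1$1)"
      by (intro continuous_on_diff assms continuous_intros)
    then show "continuous_on UNIV (\<lambda>M. if i = 1 then M$1$2 else f M - M$1$1)"
      by (cases "i = 1") (simp_all add: continuous_on_component)
  qed
  ultimately show ?thesis by simp
qed

lemma eigen_vector_2_eigenvector:
  assumes "std_eigenvalue M l"
  shows "(M - l *\<^sub>R mat 1) *v eigen_vector_2 M l = 0"
proof -
  have "(l - M$1$1) * (l - M$2$2) - M$1$2 * M$2$1 = 0"
    using assms by (simp add: std_eigenvalue_def det_2 mat_def)
  then show ?thesis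
    unfolding vec_eq_iff forall_2 matrix_minus_scaleR_mat_vector_2
    by (simp add: eigen_vector_2_def algebra_simps)
qed

lemma eigenvector_eq_scaleR_eigen_vector_2:
  assumes "(M - l *\<^sub>R mat 1) *v x = 0" "l \<noteq> M$1$1"
  shows "x = (x$2 / (l - M$1$1)) *\<^sub>R eigen_vector_2 M l"
proof -
  have "(M$1$1 - l) * x$1 + M$1$2 * x$2 = 0"
    using assms(1) matrix_minus_scaleR_mat_vector_2(1)[of M l x] by simp
  with assms(2) show ?thesis
    by (simp add: vec_eq_iff forall_2 eigen_vector_2_def field_simps)
qed

lemma interior_L_eigenvalue_imp_eigen_vector_2:
  assumes "interior_L_eigenvalue M l" "l \<noteq> M$1$1"
  obtains c where "c *\<^sub>R eigen_vector_2 M l \<in> interior lorentz_cone"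
proof -
  obtain x where x: "x \<in> interior lorentz_cone" "(M - l *\<^sub>R mat 1) *v x = 0"
    using assms(1) by (auto simp: interior_L_eigenvalue_iff)
  from x(2) assms(2) have "x = (x$2 / (l - M$1$1)) *\<^sub>R eigen_vector_2 M l"
    by (rule eigenvector_eq_scaleR_eigen_vector_2)
  with x(1) show ?thesis by (metis that)
qed

lemma eventually_interior_L_eigenvalue_eigen_branch:
  assumes "0 < char_discr A" "\<bar>s\<bar> = 1"
    and "c *\<^sub>R eigen_vector_2 A (eigen_branch s A) \<in> interior lorentz_cone"
  shows "eventually (\<lambda>B. interior_L_eigenvalue B (eigen_branch s B)) (nhds A)"
proof -
  let ?v = "\<lambda>B. c *\<^sub>R eigen_vector_2 B (eigen_branch s B)"
  have "continuous_on UNIV ?v"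
    using continuous_on_eigen_vector_2[OF continuous_on_eigen_branch]
    by (intro continuous_on_scaleR continuous_on_const)
  then have "(?v \<longlongrightarrow> ?v A) (nhds A)" by (rule continuous_on_UNIV_tendsto_nhds)
  then have "eventually (\<lambda>B. ?v B \<in> interior lorentz_cone) (nhds A)"
    using assms(3) by (rule topological_tendstoD[OF _ open_interior])
  moreover have "eventually (\<lambda>B. 0 < char_discr B) (nhds A)"
  proof -
    have "continuous_on UNIV char_discr"
      unfolding char_discr_def by (intro continuous_intros)
    then have "(char_discr \<longlongrightarrow> char_discr A) (nhds A)" by (rule continuous_on_UNIV_tendsto_nhds)
    from this assms(1) show ?thesis by (rule order_tendstoD)
  qed
  ultimately show ?thesis
  proof eventually_elim
    case (elim B)
    then have "(B - eigen_branch s B *\<^sub>R mat 1) *v ?v B = 0"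
      using std_eigenvalue_eigen_branch[of B s] assms(2)
      by (simp add: eigen_vector_2_eigenvector matrix_vector_mult_scaleR)
    with elim show ?case by (auto simp: interior_L_eigenvalue_iff)
  qed
qed

theorem lemma4p6:
  fixes A :: "real^2^2" and lamA :: real
  assumes "\<exists>mu. std_eigenvalue A mu \<and> mu \<noteq> lamA"
    and "std_eigenvalue A lamA"
    and "interior_L_eigenvalue A lamA"
    and "lamA \<noteq> A $ 1 $ 1"
  shows "\<forall>e>0. \<exists>d>0. \<forall>B :: real^2^2. frob_norm (B - A) < d \<longrightarrow>
           (\<exists>lamB. interior_L_eigenvalue B lamB \<and> \<bar>lamA - lamB\<bar> < e)"
proof (intro allI impI)
  fix e :: real assume "e > 0"
  obtain c where c: "c *\<^sub>R eigen_vector_2 A lamA \<in> interior lorentz_cone"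
    using assms(3,4) by (rule interior_L_eigenvalue_imp_eigen_vector_2)
  have discr: "0 < char_discr A" using assms(1,2) char_discr_pos by blast
  obtain s where s: "\<bar>s\<bar> = 1" "eigen_branch s A = lamA"
    using assms(2) discr by (rule std_eigenvalue_eq_eigen_branch)
  have "eventually (\<lambda>B. interior_L_eigenvalue B (eigen_branch s B)) (nhds A)"
    using discr s(1) c by (intro eventually_interior_L_eigenvalue_eigen_branch) (simp_all add: s(2))
  moreover have "eventually (\<lambda>B. \<bar>lamA - eigen_branch s B\<bar> < e) (nhds A)"
  proof -
    have "(eigen_branch s \<longlongrightarrow> lamA) (nhds A)"
      unfolding s(2)[symmetric] by (rule continuous_on_UNIV_tendsto_nhds[OF continuous_on_eigen_branch])
    then show ?thesis using \<open>e > 0\<close> by (rule tendstoD[THEN eventually_mono]) (simp add: dist_real_def)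
  qed
  ultimately have "eventually (\<lambda>B. \<exists>lamB. interior_L_eigenvalue B lamB \<and> \<bar>lamA - lamB\<bar> < e) (nhds A)"
    by eventually_elim blast
  then show "\<exists>d>0. \<forall>B. frob_norm (B - A) < d \<longrightarrow>
      (\<exists>lamB. interior_L_eigenvalue B lamB \<and> \<bar>lamA - lamB\<bar> < e)"
    by (simp add: eventually_nhds_metric frob_norm_eq_norm dist_norm)
qed

end
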